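(* For every positive integer $t$, every finite induced subgraph of $W'_t$ is triangle-free.
   Context: Construction of $G'_t$, $T'_t$, $W'_t$: build a countably infinite trigraph $G'_t$ (vertex set with two disjoint sets of edges, black and red; its total graph $\mathcal T(G'_t)$ uses all edges) and a rooted tree $T'_t$ on the same vertex set, partitioned into finite layers $L_0,L_1,\dots$ each inducing a left-to-right path of black edges. $L_0$ is a single vertex, the root. With $L_{\le i}=L_0\cup\dots\cup L_i$, layer $L_{i+1}$ is built (starting empty) as follows: for each $u\in L_i$ from left to right, let $N^\uparrow[u]:=(N_{\mathcal T(G'_t)}(u)\cap L_{\le i-1})\cup\{u\}$ and let $\mathcal B$ be the set of subsets of $N^\uparrow[u]$ in which every pair of distinct vertices is joined by a red edge of $G'_t$ (monochromatic red cliques). For every ordered pair $(B,R)$ of disjoint subsets of $N^\uparrow[u]$ with $B\in\mathcal B$ and $|B\cup R|\le t$: append a new vertex $v_{B,R}$ at the right end of $L_{i+1}$, joined by a black edge to the previously rightmost vertex of $L_{i+1}$ (if any), make it a child of $u$ in $T'_t$, add black edges from $v_{B,R}$ to all of $B$ and red edges to all of $R$; then append a further new vertex $v'_{B,R}$ at the right end of $L_{i+1}$, joined by a black edge to the previously rightmost vertex of $L_{i+1}$, and make it a child of $u$ in $T'_t$ (with no other edges). $W'_t$ is the graph on $V(G'_t)$ whose edges are the black edges of $G'_t$. *)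

theory Defs
  imports Main
begin

(* Vertices of G'_t are natural numbers (fresh identifiers); the root is 0.
   Edge sets are symmetric relations on nat. *)

type_synonym edges = "(nat \<times> nat) set"

definition add_edge :: "edges \<Rightarrow> nat \<Rightarrow> nat \<Rightarrow> edges" where
  "add_edge E a b = insert (a, b) (insert (b, a) E)"

definition star_edges :: "nat \<Rightarrow> nat set \<Rightarrow> edges" where
  "star_edges v X = {(v, x) | x. x \<in> X} \<union> {(x, v) | x. x \<in> X}"

(* State while building layer L_(i+1):
   (current list of L_(i+1), black edges, red edges, next fresh identifier) *)
type_synonym bstate = "nat list \<times> edges \<times> edges \<times> nat"

(* Processing one pair (B,R): append v_{B,R} and v'_{B,R}. *)
fun pair_step :: "nat set \<times> nat set \<Rightarrow> bstate \<Rightarrow> bstate" where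
  "pair_step (B, R) (L, Bl, Rd, n) =
     (let Bl1 = (if L = [] then Bl else add_edge Bl (last L) n);
          Bl2 = Bl1 \<union> star_edges n B;
          Rd2 = Rd \<union> star_edges n R;
          Bl3 = add_edge Bl2 n (Suc n)
      in (L @ [n, Suc n], Bl3, Rd2, n + 2))"

definition Nup :: "nat set \<Rightarrow> edges \<Rightarrow> edges \<Rightarrow> nat \<Rightarrow> nat set" where
  "Nup Lprev Bl Rd u = {w. ((u, w) \<in> Bl \<or> (u, w) \<in> Rd) \<and> w \<in> Lprev} \<union> {u}"

definition red_clique :: "edges \<Rightarrow> nat set \<Rightarrow> bool" where
  "red_clique Rd B \<longleftrightarrow> (\<forall>x\<in>B. \<forall>y\<in>B. x \<noteq> y \<longrightarrow> (x, y) \<in> Rd)"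

definition admissible_pairs :: "nat \<Rightarrow> edges \<Rightarrow> nat set \<Rightarrow> (nat set \<times> nat set) set" where
  "admissible_pairs t Rd N =
     {(B, R). B \<subseteq> N \<and> R \<subseteq> N \<and> B \<inter> R = {} \<and> red_clique Rd B \<and> card (B \<union> R) \<le> t}"

(* enum u P lists the pairs of P in the (unspecified) order in which they are processed for u *)
fun u_step :: "(nat \<Rightarrow> (nat set \<times> nat set) set \<Rightarrow> (nat set \<times> nat set) list) \<Rightarrow> nat
                 \<Rightarrow> nat set \<Rightarrow> nat \<Rightarrow> bstate \<Rightarrow> bstate" where
  "u_step enum t Lprev u (L, Bl, Rd, n) =
     fold pair_step (enum u (admissible_pairs t Rd (Nup Lprev Bl Rd u))) (L, Bl, Rd, n)"

(* build i = (layers [L_0,...,L_i], black edges, red edges, next fresh identifier) *)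
fun build :: "(nat \<Rightarrow> (nat set \<times> nat set) set \<Rightarrow> (nat set \<times> nat set) list) \<Rightarrow> nat \<Rightarrow> nat
               \<Rightarrow> nat list list \<times> edges \<times> edges \<times> nat" where
  "build enum t 0 = ([[0]], {}, {}, 1)"
| "build enum t (Suc i) =
     (case build enum t i of (Ls, Bl, Rd, n) \<Rightarrow>
        (let Lprev = \<Union> (set ` set (take i Ls));
             Li = Ls ! i
         in (case fold (u_step enum t Lprev) Li ([], Bl, Rd, n) of
               (Lnew, Bl', Rd', n') \<Rightarrow> (Ls @ [Lnew], Bl', Rd', n'))))"

definition Gt_vertices :: "(nat \<Rightarrow> (nat set \<times> nat set) set \<Rightarrow> (nat set \<times> nat set) list) \<Rightarrow> nat \<Rightarrow> nat set" where
  "Gt_vertices enum t = (\<Union>i. \<Union> (set ` set (fst (build enum t i))))"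

(* edges of W'_t = black edges of G'_t *)
definition Wt_edges :: "(nat \<Rightarrow> (nat set \<times> nat set) set \<Rightarrow> (nat set \<times> nat set) list) \<Rightarrow> nat \<Rightarrow> edges" where
  "Wt_edges enum t = (\<Union>i. fst (snd (build enum t i)))"

definition induced_edges :: "nat set \<Rightarrow> edges \<Rightarrow> edges" where
  "induced_edges S E = {(a, b). (a, b) \<in> E \<and> a \<in> S \<and> b \<in> S}"

definition triangle_free :: "nat set \<Rightarrow> edges \<Rightarrow> bool" where
  "triangle_free V E \<longleftrightarrow>
     \<not> (\<exists>a b c. a \<in> V \<and> b \<in> V \<and> c \<in> V \<and> a \<noteq> b \<and> b \<noteq> c \<and> a \<noteq> c \<and>
              (a, b) \<in> E \<and> (b, c) \<in> E \<and> (a, c) \<in> E)"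

end

theory Submission
  imports Defs
begin

text \<open>A new vertex v_{B,R} is black-joined only to B, a red clique and hence without black
  edges since black and red edges are disjoint, and to the previous rightmost vertex of its
  layer. That vertex is some v'_{B',R'}, whose only black neighbour is its twin v_{B',R'} in the
  same new layer, hence not in B. So the earlier black neighbours of every new vertex form a
  stable set, and joining a fresh vertex to a stable set never creates a triangle.\<close>

definition stable_set :: "edges \<Rightarrow> nat set \<Rightarrow> bool" where
  "stable_set E X \<longleftrightarrow> (\<forall>x\<in>X. \<forall>y\<in>X. x \<noteq> y \<longrightarrow> (x, y) \<notin> E)"

lemma mem_star_edges [simp]: "(a, b) \<in> star_edges v X \<longleftrightarrow> (a = v \<and> b \<in> X) \<or> (b = v \<and> a \<in> X)"
  by (auto simp: star_edges_def)

lemma triangle_free_Un_star_edges: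
  assumes "triangle_free V E" and "v \<notin> Field E" and "v \<notin> X" and "stable_set E X"
  shows "triangle_free V (E \<union> star_edges v X)"
  using assms unfolding triangle_free_def stable_set_def
  by (auto dest: FieldI1 FieldI2)

lemma triangle_free_induced_edges:
  "triangle_free V E \<Longrightarrow> S \<subseteq> V \<Longrightarrow> triangle_free S (induced_edges S E)"
  unfolding triangle_free_def induced_edges_def by blast

lemma triangle_free_UN_mono:
  fixes E :: "nat \<Rightarrow> edges"
  assumes "mono E" and "\<And>i. triangle_free V (E i)"
  shows "triangle_free V (\<Union>i. E i)"
  unfolding triangle_free_def
proof (intro notI, elim exE conjE)
  fix a b c
  assume "a \<in> V" "b \<in> V" "c \<in> V" "a \<noteq> b" "b \<noteq> c" "a \<noteq> c"
    and "(a, b) \<in> (\<Union>i. E i)" "(b, c) \<in> (\<Union>i. E i)" "(a, c) \<in> (\<Union>i. E i)"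
  then obtain i j k where "(a, b) \<in> E i" "(b, c) \<in> E j" "(a, c) \<in> E k"
    by blast
  then have "(a, b) \<in> E (max i (max j k))" "(b, c) \<in> E (max i (max j k))" "(a, c) \<in> E (max i (max j k))"
    using monoD[OF \<open>mono E\<close>] by (meson max.cobounded1 max.cobounded2 subsetD order.trans)+
  with assms(2) \<open>a \<in> V\<close> \<open>b \<in> V\<close> \<open>c \<in> V\<close> \<open>a \<noteq> b\<close> \<open>b \<noteq> c\<close> \<open>a \<noteq> c\<close> show False
    unfolding triangle_free_def by blast
qed

lemma pair_step_eq:
  "pair_step (B, R) (L, Bl, Rd, n) =
     (L @ [n, Suc n],
      (Bl \<union> star_edges n (B \<union> (if L = [] then {} else {last L}))) \<union> star_edges (Suc n) {n},
      Rd \<union> star_edges n R, n + 2)"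
  by (auto simp: add_edge_def Let_def)

definition trigraph_inv :: "nat \<Rightarrow> edges \<Rightarrow> edges \<Rightarrow> bool" where
  "trigraph_inv n Bl Rd \<longleftrightarrow> Bl \<subseteq> {..<n} \<times> {..<n} \<and> Rd \<subseteq> {..<n} \<times> {..<n} \<and>
     Bl \<inter> Rd = {} \<and> triangle_free UNIV Bl"

text \<open>Invariant while a new layer is built on the vertices below n0, which carried the black
  and red edges Bl0 and Rd0. The rightmost vertex built so far is some v'_{B,R}, so it has
  no black neighbour below n0.\<close>

fun layer_inv :: "nat \<Rightarrow> edges \<Rightarrow> edges \<Rightarrow> bstate \<Rightarrow> bool" where
  "layer_inv n0 Bl0 Rd0 (L, Bl, Rd, n) \<longleftrightarrow>
     n0 \<le> n \<and> Bl0 \<subseteq> Bl \<and> Rd0 \<subseteq> Rd \<and> trigraph_inv n Bl Rd \<and> set L \<subseteq> {..<n} \<and>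
     (L \<noteq> [] \<longrightarrow> n0 \<le> last L \<and> (\<forall>y<n0. (last L, y) \<notin> Bl \<and> (y, last L) \<notin> Bl))"

lemma stable_set_new_black_nbrs:
  assumes inv: "layer_inv n0 Bl0 Rd0 (L, Bl, Rd, n)"
    and B: "B \<subseteq> {..<n0}" and clique: "red_clique Rd0 B"
  shows "stable_set Bl (B \<union> (if L = [] then {} else {last L}))"
proof -
  from inv have "Rd0 \<subseteq> Rd" and "Bl \<inter> Rd = {}"
    by (simp_all add: trigraph_inv_def)
  with clique have "(x, y) \<notin> Bl" if "x \<in> B" "y \<in> B" "x \<noteq> y" for x y
    using that unfolding red_clique_def by blast
  moreover have "(last L, y) \<notin> Bl \<and> (y, last L) \<notin> Bl" if "L \<noteq> []" "y \<in> B" for y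
    using inv B that by auto
  ultimately show ?thesis
    by (auto simp: stable_set_def)
qed

lemma pair_step_layer_inv:
  assumes inv: "layer_inv n0 Bl0 Rd0 (L, Bl, Rd, n)"
    and B: "B \<subseteq> {..<n0}" and R: "R \<subseteq> {..<n0}" and BR: "B \<inter> R = {}"
    and clique: "red_clique Rd0 B"
  shows "layer_inv n0 Bl0 Rd0 (pair_step (B, R) (L, Bl, Rd, n))"
proof -
  (* n is v_{B,R}, with older black neighbours X, and Suc n is v'_{B,R}. *)
  define X where "X = B \<union> (if L = [] then {} else {last L})"
  define Bl1 where "Bl1 = Bl \<union> star_edges n X"
  from inv have "n0 \<le> n" and L: "set L \<subseteq> {..<n}"
    and Bl: "Bl \<subseteq> {..<n} \<times> {..<n}" and Rd: "Rd \<subseteq> {..<n} \<times> {..<n}"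
    and "Bl \<inter> Rd = {}" and "triangle_free UNIV Bl"
    and last: "L \<noteq> [] \<Longrightarrow> n0 \<le> last L \<and> (\<forall>y<n0. (last L, y) \<notin> Bl \<and> (y, last L) \<notin> Bl)"
    by (auto simp: trigraph_inv_def)
  have last_less: "L \<noteq> [] \<Longrightarrow> last L < n"
    using L last_in_set by blast
  have X: "X \<subseteq> {..<n}"
    using B \<open>n0 \<le> n\<close> last_less by (auto simp: X_def)
  have R_less: "R \<subseteq> {..<n}"
    using R \<open>n0 \<le> n\<close> by auto
  have "X \<inter> R = {}"
    using BR R last by (auto simp: X_def)
  have "stable_set Bl X"
    using stable_set_new_black_nbrs[OF inv B clique] by (simp add: X_def)
  then have "triangle_free UNIV Bl1"
    unfolding Bl1_def
    using \<open>triangle_free UNIV Bl\<close> Bl X by (intro triangle_free_Un_star_edges) (auto simp: Field_def)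
  moreover have Bl1: "Bl1 \<subseteq> {..<Suc n} \<times> {..<Suc n}"
    using Bl X by (auto simp: Bl1_def)
  ultimately have "triangle_free UNIV (Bl1 \<union> star_edges (Suc n) {n})"
    by (intro triangle_free_Un_star_edges) (auto simp: Field_def stable_set_def)
  moreover have "(Bl1 \<union> star_edges (Suc n) {n}) \<inter> (Rd \<union> star_edges n R) = {}"
    using \<open>Bl \<inter> Rd = {}\<close> \<open>X \<inter> R = {}\<close> Bl Rd X R_less by (fastforce simp: Bl1_def subset_eq)
  moreover have "Bl1 \<union> star_edges (Suc n) {n} \<subseteq> {..<n + 2} \<times> {..<n + 2}"
    using Bl1 by fastforce
  moreover have "Rd \<union> star_edges n R \<subseteq> {..<n + 2} \<times> {..<n + 2}"
    using Rd R_less by fastforce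
  moreover have "(Suc n, y) \<notin> Bl1 \<and> (y, Suc n) \<notin> Bl1" for y
    using Bl1 by auto
  moreover have "pair_step (B, R) (L, Bl, Rd, n) =
      (L @ [n, Suc n], Bl1 \<union> star_edges (Suc n) {n}, Rd \<union> star_edges n R, n + 2)"
    by (simp only: pair_step_eq Bl1_def X_def)
  ultimately show ?thesis
    using inv L by (auto simp: trigraph_inv_def Bl1_def)
qed

lemma u_step_layer_inv:
  assumes enum: "\<And>P. finite P \<Longrightarrow> set (enum u P) = P"
    and "u < n0" and "Lprev \<subseteq> {..<n0}" and inv: "layer_inv n0 Bl0 Rd0 s"
  shows "layer_inv n0 Bl0 Rd0 (u_step enum t Lprev u s)"
proof -
  obtain L Bl Rd n where s: "s = (L, Bl, Rd, n)"
    by (cases s) auto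
  define P where "P = admissible_pairs t Rd (Nup Lprev Bl Rd u)"
  have "Nup Lprev Bl Rd u \<subseteq> {..<n0}"
    using \<open>u < n0\<close> \<open>Lprev \<subseteq> {..<n0}\<close> by (auto simp: Nup_def)
  then have P: "P \<subseteq> {(B, R). B \<subseteq> {..<n0} \<and> R \<subseteq> {..<n0} \<and> B \<inter> R = {} \<and> red_clique Rd B}"
    by (auto simp: P_def admissible_pairs_def)
  then have "P \<subseteq> Pow {..<n0} \<times> Pow {..<n0}"
    by auto
  then have "finite P"
    by (rule finite_subset) simp
  have "layer_inv n0 Bl Rd (fold pair_step (enum u P) s)"
  proof (rule fold_invariant[where Q = "\<lambda>p. p \<in> P"])
    show "layer_inv n0 Bl Rd s"
      using inv by (simp add: s)
    show "p \<in> set (enum u P) \<Longrightarrow> p \<in> P" for p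
      using enum \<open>finite P\<close> by blast
    show "layer_inv n0 Bl Rd (pair_step p s')" if "p \<in> P" "layer_inv n0 Bl Rd s'" for p s'
      using that P pair_step_layer_inv by (cases p; cases s') blast
  qed
  with inv show ?thesis
    by (cases "fold pair_step (enum u P) s") (auto simp: s P_def)
qed

fun build_inv :: "nat \<Rightarrow> nat list list \<times> edges \<times> edges \<times> nat \<Rightarrow> bool" where
  "build_inv i (Ls, Bl, Rd, n) \<longleftrightarrow>
     length Ls = Suc i \<and> (\<forall>l\<in>set Ls. set l \<subseteq> {..<n}) \<and> trigraph_inv n Bl Rd"

abbreviation black_edges ::
    "(nat \<Rightarrow> (nat set \<times> nat set) set \<Rightarrow> (nat set \<times> nat set) list) \<Rightarrow> nat \<Rightarrow> nat \<Rightarrow> edges" where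
  "black_edges enum t i \<equiv> fst (snd (build enum t i))"

lemma build_Suc_inv:
  assumes enum: "\<And>u P. finite P \<Longrightarrow> set (enum u P) = P"
    and inv: "build_inv i (build enum t i)"
  shows "build_inv (Suc i) (build enum t (Suc i)) \<and> black_edges enum t i \<subseteq> black_edges enum t (Suc i)"
proof -
  obtain Ls Bl Rd n where b: "build enum t i = (Ls, Bl, Rd, n)"
    by (cases "build enum t i") auto
  define Lprev where "Lprev = \<Union> (set ` set (take i Ls))"
  obtain Lnew Bl' Rd' n' where new: "fold (u_step enum t Lprev) (Ls ! i) ([], Bl, Rd, n) = (Lnew, Bl', Rd', n')"
    by (cases "fold (u_step enum t Lprev) (Ls ! i) ([], Bl, Rd, n)") auto
  from inv have "length Ls = Suc i" and layers: "\<forall>l\<in>set Ls. set l \<subseteq> {..<n}" and "trigraph_inv n Bl Rd"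
    by (simp_all add: b)
  then have "Ls ! i \<in> set Ls"
    by simp
  have "Lprev \<subseteq> {..<n}"
    using layers by (auto simp: Lprev_def dest: in_set_takeD)
  have "layer_inv n Bl Rd (fold (u_step enum t Lprev) (Ls ! i) ([], Bl, Rd, n))"
  proof (rule fold_invariant[where Q = "\<lambda>u. u < n"])
    show "layer_inv n Bl Rd ([], Bl, Rd, n)"
      using \<open>trigraph_inv n Bl Rd\<close> by simp
    show "u \<in> set (Ls ! i) \<Longrightarrow> u < n" for u
      using layers \<open>Ls ! i \<in> set Ls\<close> by blast
    show "layer_inv n Bl Rd (u_step enum t Lprev u s)" if "u < n" "layer_inv n Bl Rd s" for u s
      using u_step_layer_inv enum that \<open>Lprev \<subseteq> {..<n}\<close> by blast
  qed
  then have "n \<le> n'" "Bl \<subseteq> Bl'" "trigraph_inv n' Bl' Rd'" "set Lnew \<subseteq> {..<n'}"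
    by (simp_all add: new)
  moreover have "build enum t (Suc i) = (Ls @ [Lnew], Bl', Rd', n')"
    using b new by (simp add: Lprev_def)
  ultimately show ?thesis
    using b \<open>length Ls = Suc i\<close> layers by fastforce
qed

lemma build_inv:
  assumes "\<And>u P. finite P \<Longrightarrow> set (enum u P) = P"
  shows "build_inv i (build enum t i)"
proof (induction i)
  case 0
  show ?case
    by (simp add: trigraph_inv_def triangle_free_def)
next
  case (Suc i)
  then show ?case
    using build_Suc_inv[of enum, OF assms] by blast
qed

lemma mono_black_edges:
  assumes "\<And>u P. finite P \<Longrightarrow> set (enum u P) = P"
  shows "mono (black_edges enum t)"
  unfolding mono_iff_le_Suc using build_Suc_inv[of enum, OF assms build_inv[OF assms]] by blast

lemma triangle_free_black_edges:
  assumes "\<And>u P. finite P \<Longrightarrow> set (enum u P) = P"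
  shows "triangle_free UNIV (black_edges enum t i)"
  using build_inv[of enum i t, OF assms] by (cases "build enum t i") (simp add: trigraph_inv_def)

theorem mainTheorem14:
  fixes enum :: "nat \<Rightarrow> (nat set \<times> nat set) set \<Rightarrow> (nat set \<times> nat set) list"
    and t :: nat and S :: "nat set"
  assumes enum_ok: "\<And>u P. finite P \<Longrightarrow> set (enum u P) = P \<and> distinct (enum u P)"
    and "t \<ge> 1"
    and "finite S" and "S \<subseteq> Gt_vertices enum t"
  shows "triangle_free S (induced_edges S (Wt_edges enum t))"
proof -
  (* W'_t itself is triangle-free. *)
  have enum: "\<And>u P. finite P \<Longrightarrow> set (enum u P) = P"
    using enum_ok by blast
  have "triangle_free UNIV (\<Union>i. black_edges enum t i)"
    using mono_black_edges[OF enum] triangle_free_black_edges[OF enum] by (rule triangle_free_UN_mono)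
  then show ?thesis
    unfolding Wt_edges_def by (rule triangle_free_induced_edges) simp
qed

end
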